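(* Let $(X,*,\circ)$ be a left skew brace and $U,V\subseteq X$ sub-skew braces. The following are equivalent: (1) $[U,V]=0$, i.e. there exists a skew brace morphism $\varphi\colon U\times V\to X$ with $\varphi(u,1)=u$ and $\varphi(1,v)=v$ for all $u\in U$, $v\in V$; (2) for all $(u,v)\in U\times V$ we have $u\circ v=u*v$, and this restricted operation is commutative, i.e. $u*v=v*u$ and $u\circ v=v\circ u$; (3) for all $(u,v)\in U\times V$, $\lambda_u(v)=v$, every element of $U$ commutes with every element of $V$ in the group $(X,* )$, and every element of $U$ commutes with every element of $V$ in the group $(X,\circ)$. Consequently, an abelian object of $\mathsf{SKB}$ (a skew brace $X$ with $[X,X]=0$) is necessarily of the form $(A,+,+)$ with $(A,+)$ an abelian group.
   Context: A (left) skew brace is a triple $(A,*,\circ)$ with $(A,* )$ and $(A,\circ)$ groups such that $a\circ(b*c)=(a\circ b)*a^{-*}*(a\circ c)$ for all $a,b,c\in A$; $a^{-*}$ denotes the inverse in $(A,* )$. The two groups share the identity $1$. Morphisms are maps that are homomorphisms for both operations; products of skew braces are taken componentwise. For $a,u\in A$ put $\lambda_a(u)=a^{-*}*(a\circ u)$. $\mathsf{SKB}$ denotes the category of left skew braces. *)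

theory Defs
  imports "HOL-Algebra.Group"
begin

text \<open>A skew brace is given by a carrier A, the operation s (written * in the paper),
  the operation c (written \<circ>), and the common identity e.\<close>

definition grp_of :: "'a set \<Rightarrow> ('a \<Rightarrow> 'a \<Rightarrow> 'a) \<Rightarrow> 'a \<Rightarrow> 'a monoid" where
  "grp_of A m e = \<lparr>carrier = A, mult = m, one = e\<rparr>"

definition skew_brace :: "'a set \<Rightarrow> ('a \<Rightarrow> 'a \<Rightarrow> 'a) \<Rightarrow> ('a \<Rightarrow> 'a \<Rightarrow> 'a) \<Rightarrow> 'a \<Rightarrow> bool" where
  "skew_brace A s c e \<longleftrightarrow> group (grp_of A s e) \<and> group (grp_of A c e) \<and>
     (\<forall>a\<in>A. \<forall>b\<in>A. \<forall>x\<in>A.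
        c a (s b x) = s (s (c a b) (inv\<^bsub>grp_of A s e\<^esub> a)) (c a x))"

definition sub_skew_brace :: "'a set \<Rightarrow> 'a set \<Rightarrow> ('a \<Rightarrow> 'a \<Rightarrow> 'a) \<Rightarrow> ('a \<Rightarrow> 'a \<Rightarrow> 'a) \<Rightarrow> 'a \<Rightarrow> bool" where
  "sub_skew_brace U A s c e \<longleftrightarrow>
     subgroup U (grp_of A s e) \<and> subgroup U (grp_of A c e)"

definition sb_lambda :: "'a set \<Rightarrow> ('a \<Rightarrow> 'a \<Rightarrow> 'a) \<Rightarrow> ('a \<Rightarrow> 'a \<Rightarrow> 'a) \<Rightarrow> 'a \<Rightarrow> 'a \<Rightarrow> 'a \<Rightarrow> 'a" where
  "sb_lambda A s c e a u = s (inv\<^bsub>grp_of A s e\<^esub> a) (c a u)"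

definition prod_op :: "('a \<Rightarrow> 'a \<Rightarrow> 'a) \<Rightarrow> ('b \<Rightarrow> 'b \<Rightarrow> 'b) \<Rightarrow> ('a \<times> 'b) \<Rightarrow> ('a \<times> 'b) \<Rightarrow> ('a \<times> 'b)" where
  "prod_op m n p q = (m (fst p) (fst q), n (snd p) (snd q))"

definition sb_morphism :: "'a set \<Rightarrow> ('a \<Rightarrow> 'a \<Rightarrow> 'a) \<Rightarrow> ('a \<Rightarrow> 'a \<Rightarrow> 'a) \<Rightarrow>
    'b set \<Rightarrow> ('b \<Rightarrow> 'b \<Rightarrow> 'b) \<Rightarrow> ('b \<Rightarrow> 'b \<Rightarrow> 'b) \<Rightarrow> ('a \<Rightarrow> 'b) \<Rightarrow> bool" where
  "sb_morphism A s c B s' c' f \<longleftrightarrow> f \<in> A \<rightarrow> B \<and>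
     (\<forall>x\<in>A. \<forall>y\<in>A. f (s x y) = s' (f x) (f y) \<and> f (c x y) = c' (f x) (f y))"

definition sb_commute :: "'a set \<Rightarrow> ('a \<Rightarrow> 'a \<Rightarrow> 'a) \<Rightarrow> ('a \<Rightarrow> 'a \<Rightarrow> 'a) \<Rightarrow> 'a \<Rightarrow> 'a set \<Rightarrow> 'a set \<Rightarrow> bool" where
  "sb_commute A s c e U V \<longleftrightarrow> (\<exists>\<phi>.
     sb_morphism (U \<times> V) (prod_op s s) (prod_op c c) A s c \<phi> \<and>
     (\<forall>u\<in>U. \<phi> (u, e) = u) \<and> (\<forall>v\<in>V. \<phi> (e, v) = v))"

end

theory Submission
  imports Defs
begin

text \<open>A morphism \<open>\<phi>\<close> from \<open>U \<times> V\<close> with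
  \<open>\<phi>(u,1) = u\<close> and \<open>\<phi>(1,v) = v\<close> is forced, since \<open>(u,v) = (u,1)(1,v) = (1,v)(u,1)\<close> for
  both operations, to satisfy \<open>\<phi>(u,v) = u * v = v * u = u \<circ> v = v \<circ> u\<close>. Conversely, if
  the two operations agree and commute on \<open>U \<times> V\<close>, then \<open>(u,v) \<mapsto> u * v\<close> is a morphism
  by the interchange law \<open>(ab)(cd) = (ac)(bd)\<close> for commuting \<open>b, c\<close>. Finally
  \<open>\<lambda>\<^sub>u(v) = v\<close> just says \<open>u \<circ> v = u * v\<close>.\<close>

lemma grp_of_simps [simp]:
  "carrier (grp_of A m e) = A" "mult (grp_of A m e) = m" "one (grp_of A m e) = e"
  by (simp_all add: grp_of_def)

lemma (in monoid) m_interchange: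
  assumes "a \<in> carrier G" "b \<in> carrier G" "c \<in> carrier G" "d \<in> carrier G"
    and "b \<otimes> c = c \<otimes> b"
  shows "(a \<otimes> b) \<otimes> (c \<otimes> d) = (a \<otimes> c) \<otimes> (b \<otimes> d)"
proof -
  have "(a \<otimes> b) \<otimes> (c \<otimes> d) = a \<otimes> ((b \<otimes> c) \<otimes> d)"
    using assms(1-4) by (simp add: m_assoc)
  also have "\<dots> = a \<otimes> ((c \<otimes> b) \<otimes> d)"
    by (simp only: assms(5))
  also have "\<dots> = (a \<otimes> c) \<otimes> (b \<otimes> d)"
    using assms(1-4) by (simp add: m_assoc)
  finally show ?thesis .
qed

lemma prod_hom_eq_mult:
  assumes "monoid (grp_of A m e)" and "U \<subseteq> A" "V \<subseteq> A" "e \<in> U" "e \<in> V"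
    and hom: "\<forall>x\<in>U \<times> V. \<forall>y\<in>U \<times> V. \<phi> (prod_op m m x y) = m (\<phi> x) (\<phi> y)"
    and left: "\<forall>u\<in>U. \<phi> (u, e) = u" and right: "\<forall>v\<in>V. \<phi> (e, v) = v"
    and "u \<in> U" "v \<in> V"
  shows "\<phi> (u, v) = m u v" "\<phi> (u, v) = m v u"
proof -
  interpret monoid "grp_of A m e" by fact
  have "u \<in> A" "v \<in> A" using assms by auto
  then have "prod_op m m (u, e) (e, v) = (u, v)" "prod_op m m (e, v) (u, e) = (u, v)"
    using l_one r_one by (simp_all add: prod_op_def)
  then show "\<phi> (u, v) = m u v" "\<phi> (u, v) = m v u"
    using hom left right assms by (metis SigmaI)+
qed

locale bigroup = S: group "grp_of A s e" + C: group "grp_of A c e"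
  for A :: "'a set" and s c :: "'a \<Rightarrow> 'a \<Rightarrow> 'a" and e :: 'a
begin

lemma sb_lambda_eq_iff:
  assumes "u \<in> A" "v \<in> A"
  shows "sb_lambda A s c e u v = v \<longleftrightarrow> c u v = s u v"
  using S.inv_solve_left'[of v u "c u v"] C.m_closed[of u v] assms
  by (simp add: sb_lambda_def)

lemma mult_eq_commute_if_sb_commute:
  assumes "sb_commute A s c e U V" and "U \<subseteq> A" "V \<subseteq> A" "e \<in> U" "e \<in> V"
  shows "\<forall>u\<in>U. \<forall>v\<in>V. c u v = s u v \<and> s u v = s v u \<and> c u v = c v u"
proof (intro ballI)
  fix u v assume "u \<in> U" "v \<in> V"
  obtain \<phi> where hom: "sb_morphism (U \<times> V) (prod_op s s) (prod_op c c) A s c \<phi>"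
    and left: "\<forall>u\<in>U. \<phi> (u, e) = u" and right: "\<forall>v\<in>V. \<phi> (e, v) = v"
    using assms(1) unfolding sb_commute_def by blast
  have hom_s: "\<forall>x\<in>U \<times> V. \<forall>y\<in>U \<times> V. \<phi> (prod_op s s x y) = s (\<phi> x) (\<phi> y)"
    and hom_c: "\<forall>x\<in>U \<times> V. \<forall>y\<in>U \<times> V. \<phi> (prod_op c c x y) = c (\<phi> x) (\<phi> y)"
    using hom unfolding sb_morphism_def by blast+
  have "\<phi> (u, v) = s u v" "\<phi> (u, v) = s v u"
    using prod_hom_eq_mult[OF S.is_monoid assms(2-5) hom_s left right \<open>u \<in> U\<close> \<open>v \<in> V\<close>] .
  moreover have "\<phi> (u, v) = c u v" "\<phi> (u, v) = c v u"
    using prod_hom_eq_mult[OF C.is_monoid assms(2-5) hom_c left right \<open>u \<in> U\<close> \<open>v \<in> V\<close>] .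
  ultimately show "c u v = s u v \<and> s u v = s v u \<and> c u v = c v u" by simp
qed

lemma sb_commute_if_mult_eq_commute:
  assumes U: "subgroup U (grp_of A c e)" and V: "subgroup V (grp_of A c e)"
    and agree: "\<forall>u\<in>U. \<forall>v\<in>V. c u v = s u v \<and> s u v = s v u \<and> c u v = c v u"
  shows "sb_commute A s c e U V"
  unfolding sb_commute_def
proof (intro exI[of _ "\<lambda>(u, v). s u v"] conjI)
  have "U \<subseteq> A" "V \<subseteq> A"
    using subgroup.subset[OF U] subgroup.subset[OF V] by simp_all
  then show "\<forall>u\<in>U. (\<lambda>(u, v). s u v) (u, e) = u" "\<forall>v\<in>V. (\<lambda>(u, v). s u v) (e, v) = v"
    using S.r_one S.l_one by auto
  show "sb_morphism (U \<times> V) (prod_op s s) (prod_op c c) A s c (\<lambda>(u, v). s u v)"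
    unfolding sb_morphism_def
  proof (intro conjI ballI)
    show "(\<lambda>(u, v). s u v) \<in> U \<times> V \<rightarrow> A"
      using \<open>U \<subseteq> A\<close> \<open>V \<subseteq> A\<close> S.m_closed by auto
  next
    fix x y assume "x \<in> U \<times> V" "y \<in> U \<times> V"
    then obtain u1 v1 u2 v2 where x: "x = (u1, v1)" and y: "y = (u2, v2)"
      and in_UV: "u1 \<in> U" "v1 \<in> V" "u2 \<in> U" "v2 \<in> V"
      by auto
    then have in_A: "u1 \<in> A" "v1 \<in> A" "u2 \<in> A" "v2 \<in> A"
      using \<open>U \<subseteq> A\<close> \<open>V \<subseteq> A\<close> by auto
    have swap: "s u2 v1 = s v1 u2" "c u2 v1 = c v1 u2"
      using agree in_UV by blast+
    have "s (s u1 u2) (s v1 v2) = s (s u1 v1) (s u2 v2)"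
      using S.m_interchange[of u1 u2 v1 v2] swap in_A by simp
    then show "(\<lambda>(u, v). s u v) (prod_op s s x y) =
        s ((\<lambda>(u, v). s u v) x) ((\<lambda>(u, v). s u v) y)"
      by (simp add: x y prod_op_def)
    have "c u1 u2 \<in> U" "c v1 v2 \<in> V"
      using subgroup.m_closed[OF U] subgroup.m_closed[OF V] in_UV by auto
    then have "s (c u1 u2) (c v1 v2) = c (c u1 u2) (c v1 v2)"
      using agree by simp
    also have "\<dots> = c (c u1 v1) (c u2 v2)"
      using C.m_interchange[of u1 u2 v1 v2] swap in_A by simp
    also have "\<dots> = c (s u1 v1) (s u2 v2)"
      using agree in_UV by simp
    finally show "(\<lambda>(u, v). s u v) (prod_op c c x y) =
        c ((\<lambda>(u, v). s u v) x) ((\<lambda>(u, v). s u v) y)"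
      by (simp add: x y prod_op_def)
  qed
qed

lemma sb_commute_iff_mult_eq_commute:
  assumes "sub_skew_brace U A s c e" "sub_skew_brace V A s c e"
  shows "sb_commute A s c e U V \<longleftrightarrow>
    (\<forall>u\<in>U. \<forall>v\<in>V. c u v = s u v \<and> s u v = s v u \<and> c u v = c v u)"
proof -
  have S_sub: "subgroup U (grp_of A s e)" "subgroup V (grp_of A s e)"
    and C_sub: "subgroup U (grp_of A c e)" "subgroup V (grp_of A c e)"
    using assms by (simp_all add: sub_skew_brace_def)
  have "U \<subseteq> A" "V \<subseteq> A" "e \<in> U" "e \<in> V"
    using subgroup.subset[OF S_sub(1)] subgroup.subset[OF S_sub(2)]
      subgroup.one_closed[OF S_sub(1)] subgroup.one_closed[OF S_sub(2)]
    by simp_all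
  then show ?thesis
    using mult_eq_commute_if_sb_commute sb_commute_if_mult_eq_commute[OF C_sub] by blast
qed

lemma sb_commute_iff_sb_lambda:
  assumes "sub_skew_brace U A s c e" "sub_skew_brace V A s c e"
  shows "sb_commute A s c e U V \<longleftrightarrow>
    (\<forall>u\<in>U. \<forall>v\<in>V. sb_lambda A s c e u v = v \<and> s u v = s v u \<and> c u v = c v u)"
proof -
  have "U \<subseteq> A" "V \<subseteq> A"
    using assms subgroup.subset by (fastforce simp: sub_skew_brace_def)+
  then have "sb_lambda A s c e u v = v \<longleftrightarrow> c u v = s u v" if "u \<in> U" "v \<in> V" for u v
    using that sb_lambda_eq_iff by blast
  then show ?thesis
    using sb_commute_iff_mult_eq_commute[OF assms] by simp
qed

lemma sub_skew_brace_self: "sub_skew_brace A A s c e"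
  using S.subgroup_self C.subgroup_self by (simp add: sub_skew_brace_def)

end

lemma skew_brace_bigroup: "skew_brace A s c e \<Longrightarrow> bigroup A s c e"
  by (simp add: skew_brace_def bigroup_def)

theorem proposition3p9:
  fixes A :: "'a set" and s c :: "'a \<Rightarrow> 'a \<Rightarrow> 'a" and e :: 'a
  assumes "skew_brace A s c e"
  shows "(\<forall>U V. sub_skew_brace U A s c e \<longrightarrow> sub_skew_brace V A s c e \<longrightarrow>
            ((sb_commute A s c e U V \<longleftrightarrow>
               (\<forall>u\<in>U. \<forall>v\<in>V. c u v = s u v \<and> s u v = s v u \<and> c u v = c v u))
           \<and> (sb_commute A s c e U V \<longleftrightarrow>
               (\<forall>u\<in>U. \<forall>v\<in>V. sb_lambda A s c e u v = v \<and> s u v = s v u \<and> c u v = c v u))))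
       \<and> (sb_commute A s c e A A \<longrightarrow>
            (\<forall>x\<in>A. \<forall>y\<in>A. s x y = c x y \<and> s x y = s y x))"
proof -
  interpret bigroup A s c e
    using assms by (rule skew_brace_bigroup)
  show ?thesis
  proof (intro conjI allI impI)
    fix U V assume "sub_skew_brace U A s c e" "sub_skew_brace V A s c e"
    then show "sb_commute A s c e U V \<longleftrightarrow>
        (\<forall>u\<in>U. \<forall>v\<in>V. c u v = s u v \<and> s u v = s v u \<and> c u v = c v u)"
      and "sb_commute A s c e U V \<longleftrightarrow>
        (\<forall>u\<in>U. \<forall>v\<in>V. sb_lambda A s c e u v = v \<and> s u v = s v u \<and> c u v = c v u)"
      by (rule sb_commute_iff_mult_eq_commute, rule sb_commute_iff_sb_lambda)
  next
    assume "sb_commute A s c e A A"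
    then have "\<forall>x\<in>A. \<forall>y\<in>A. c x y = s x y \<and> s x y = s y x \<and> c x y = c y x"
      using sb_commute_iff_mult_eq_commute[OF sub_skew_brace_self sub_skew_brace_self] by simp
    then show "\<forall>x\<in>A. \<forall>y\<in>A. s x y = c x y \<and> s x y = s y x"
      by simp
  qed
qed

end
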